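(* There exist $\delta>0$ and a universal constant $C_0>0$ such that the following holds. Let $a_0(x)=\cos(x)+\tilde a_0(x)$ on $[-\pi,\pi]$ with $\|\tilde a_0\|_{C^3([-\pi,\pi])}\le\delta$, and let $x_0^*$ be the unique point at which $a_0$ attains its maximum. Set $$\mu_0=-\partial_x^2a_0(x_0^* ),\qquad\alpha_{-1,0}=1+\frac{a_0(x_0^* )}{\partial_x^2a_0(x_0^* )},\qquad\alpha_{1,0}=0,$$ and on $[-\pi-x_0^*,\pi-x_0^*]$ define $$\eta_0(y)=\frac1{\mu_0}a_0(x_0^*+y)-\cos(y),\qquad \xi_0(y)=\eta_0(y)-\alpha_{-1,0}\varphi_{-1}(y)-\alpha_{1,0}\varphi_1(y),$$ where $\varphi_{-1}(y)=-2\cos y+1-y\sin y$ and $\varphi_1(y)=2\cos y+1+y\sin y$ (and $a_0$ is extended $2\pi$-periodically). Then $|\mu_0-1|\le C_0\delta$, $|\alpha_{-1,0}|\le C_0\delta$, $\xi_0(0)=\partial_y\xi_0(0)=\partial_y^2\xi_0(0)=0$, and $$\|\xi_0\|_{L^\infty([-\pi-x_0^*,\pi-x_0^*])}+\sum_{j=1}^3\|\partial_y^j\eta_0\|_{L^\infty([-\pi-x_0^*,\pi-x_0^*])}\le C_0\delta.$$ *)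

theory Defs
  imports "HOL-Analysis.Analysis"
begin

text \<open>j-th derivative of f relative to the set S (one-sided at endpoints of a closed interval).\<close>
fun nderiv :: "nat \<Rightarrow> (real \<Rightarrow> real) \<Rightarrow> real set \<Rightarrow> real \<Rightarrow> real" where
  "nderiv 0 f S = f"
| "nderiv (Suc j) f S = (\<lambda>x. vector_derivative (nderiv j f S) (at x within S))"

definition Ck_on :: "nat \<Rightarrow> (real \<Rightarrow> real) \<Rightarrow> real set \<Rightarrow> bool" where
  "Ck_on k f S \<longleftrightarrow>
     (\<forall>j<k. \<forall>x\<in>S. (nderiv j f S has_real_derivative nderiv (Suc j) f S x) (at x within S))
     \<and> continuous_on S (nderiv k f S)"

definition supnorm :: "(real \<Rightarrow> real) \<Rightarrow> real set \<Rightarrow> real" where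
  "supnorm f S = (SUP x\<in>S. \<bar>f x\<bar>)"

definition Ck_norm :: "nat \<Rightarrow> (real \<Rightarrow> real) \<Rightarrow> real set \<Rightarrow> real" where
  "Ck_norm k f S = (\<Sum>j\<le>k. supnorm (nderiv j f S) S)"

definition phi_m1 :: "real \<Rightarrow> real" where
  "phi_m1 y = - 2 * cos y + 1 - y * sin y"

definition phi_1 :: "real \<Rightarrow> real" where
  "phi_1 y = 2 * cos y + 1 + y * sin y"

end

theory Submission
  imports Defs
begin

text \<open>Write \<open>a0 = cos + g\<close> with \<open>\<parallel>g\<parallel>\<^sub>C\<^sub>3 \<le> \<epsilon> \<le> 1/10\<close>. Comparing \<open>a0 x0\<close> with \<open>a0 0\<close>
  gives \<open>cos x0 \<ge> 1 - 2\<epsilon>\<close>, so every maximiser lies in \<open>|x| < pi/3\<close>, where \<open>a0'' < 0\<close>; hence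
  the maximiser is unique and \<open>a0'(x0) = 0\<close>, which gives \<open>|sin x0| \<le> \<epsilon>\<close> and
  \<open>1 - cos x0 \<le> \<epsilon>\<close>. The k-th derivative of \<open>eta0\<close> is \<open>(a0^(k)(x0 + y) - mu0 cos^(k)(y)) / mu0\<close>,
  whose numerator is the shift error of \<open>cos^(k)\<close> by \<open>x0\<close>, plus \<open>(1 - mu0) cos^(k)(y)\<close>, plus
  \<open>g^(k)(x0 + y)\<close>, each \<open>O(\<epsilon>)\<close>. Since \<open>phi_m1 0 = -1\<close> and \<open>phi_m1' 0 = phi_m1'' 0 = 0\<close>, the
  choice of \<open>mu0\<close> and \<open>am1\<close> makes \<open>xi0\<close> vanish to second order at \<open>0\<close>.\<close>

lemma nderiv_eq_on_interval:
  fixes F :: "nat \<Rightarrow> real \<Rightarrow> real"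
  assumes "a < b"
    and F_deriv: "\<And>k x. k < n \<Longrightarrow> x \<in> {a..b} \<Longrightarrow>
                   (F k has_real_derivative F (Suc k) x) (at x within {a..b})"
    and F0: "\<And>x. x \<in> {a..b} \<Longrightarrow> f x = F 0 x"
    and "j \<le> n" and x: "x \<in> {a..b}"
  shows "nderiv j f {a..b} x = F j x"
  using \<open>j \<le> n\<close> x
proof (induction j arbitrary: x)
  case 0
  then show ?case using F0 by simp
next
  case (Suc j)
  have "(F j has_real_derivative F (Suc j) x) (at x within {a..b})"
    using F_deriv Suc.prems by simp
  then have "(nderiv j f {a..b} has_real_derivative F (Suc j) x) (at x within {a..b})"
    by (rule has_field_derivative_transform_within[OF _ zero_less_one \<open>x \<in> {a..b}\<close>])
       (use Suc in auto)
  then show ?case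
    using vector_derivative_within_closed_interval[OF \<open>a < b\<close> \<open>x \<in> {a..b}\<close>]
    by (simp add: has_real_derivative_iff_has_vector_derivative)
qed

lemma continuous_on_nderiv:
  assumes "Ck_on k f S" "j \<le> k"
  shows "continuous_on S (nderiv j f S)"
proof (cases "j < k")
  case True
  then show ?thesis
    using assms(1) unfolding Ck_on_def by (intro DERIV_continuous_on) auto
next
  case False
  then show ?thesis using assms unfolding Ck_on_def by simp
qed

lemma abs_le_supnorm:
  assumes "continuous_on S f" "compact S" "x \<in> S"
  shows "\<bar>f x\<bar> \<le> supnorm f S"
proof -
  have "compact ((\<lambda>x. \<bar>f x\<bar>) ` S)"
    using assms by (intro compact_continuous_image continuous_intros)
  then have "bdd_above ((\<lambda>x. \<bar>f x\<bar>) ` S)"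
    by (intro bounded_imp_bdd_above compact_imp_bounded)
  then show ?thesis
    unfolding supnorm_def by (rule cSUP_upper[OF \<open>x \<in> S\<close>])
qed

lemma supnorm_le:
  assumes "S \<noteq> {}" "\<And>x. x \<in> S \<Longrightarrow> \<bar>f x\<bar> \<le> c"
  shows "supnorm f S \<le> c"
  unfolding supnorm_def using assms by (rule cSUP_least)

lemma abs_nderiv_le_Ck_norm:
  assumes "Ck_on k f S" "compact S" "j \<le> k" "x \<in> S"
  shows "\<bar>nderiv j f S x\<bar> \<le> Ck_norm k f S"
proof -
  have bound: "\<bar>nderiv i f S y\<bar> \<le> supnorm (nderiv i f S) S" if "i \<le> k" "y \<in> S" for i y
    using abs_le_supnorm[OF continuous_on_nderiv[OF assms(1) that(1)] assms(2) that(2)] .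
  have "\<forall>i\<in>{..k}. 0 \<le> supnorm (nderiv i f S) S"
    using bound[OF _ \<open>x \<in> S\<close>] by (auto intro: order_trans[OF abs_ge_zero])
  then have "supnorm (nderiv j f S) S \<le> Ck_norm k f S"
    unfolding Ck_norm_def using \<open>j \<le> k\<close> by (intro member_le_sum) auto
  then show ?thesis using bound[OF \<open>j \<le> k\<close> \<open>x \<in> S\<close>] by linarith
qed

lemma has_real_derivative_shift:
  assumes "(f has_real_derivative D) (at (c + y) within ((+) c ` T))"
  shows "((\<lambda>y. f (c + y)) has_real_derivative D) (at y within T)"
proof -
  have "((+) c has_real_derivative 1) (at y within T)"
    by (auto intro!: derivative_eq_intros)
  from DERIV_image_chain[OF assms this] show ?thesis by (simp add: o_def)
qed

definition cos_deriv :: "nat \<Rightarrow> real \<Rightarrow> real" where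
  "cos_deriv k x = cos (x + real k * pi / 2)"

lemma has_real_derivative_cos_deriv:
  "(cos_deriv k has_real_derivative cos_deriv (Suc k) x) (at x within S)"
proof -
  have "cos_deriv (Suc k) x = cos ((x + real k * pi / 2) + pi / 2)"
    by (simp add: cos_deriv_def algebra_simps add_divide_distrib)
  then have "cos_deriv (Suc k) x = - sin (x + real k * pi / 2)"
    by (simp add: minus_sin_cos_eq)
  then show ?thesis
    unfolding cos_deriv_def by (auto intro!: derivative_eq_intros)
qed

lemma cos_deriv_0 [simp]: "cos_deriv 0 = cos"
  and cos_deriv_1: "cos_deriv (Suc 0) x = - sin x"
  and cos_deriv_2: "cos_deriv 2 x = - cos x"
  by (simp_all add: fun_eq_iff cos_deriv_def minus_sin_cos_eq)

lemma abs_cos_add_diff_le: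
  fixes a y :: real
  shows "\<bar>cos (a + y) - cos y\<bar> \<le> (1 - cos a) + \<bar>sin a\<bar>"
proof -
  have "\<bar>cos (a + y) - cos y\<bar> = \<bar>cos y * (cos a - 1) - sin y * sin a\<bar>"
    by (simp add: cos_add[of a y] algebra_simps)
  also have "\<dots> \<le> \<bar>cos y\<bar> * \<bar>cos a - 1\<bar> + \<bar>sin y\<bar> * \<bar>sin a\<bar>"
    by (metis abs_mult abs_triangle_ineq4)
  also have "\<dots> \<le> \<bar>cos a - 1\<bar> + \<bar>sin a\<bar>"
    by (intro add_mono mult_left_le_one_le) auto
  finally show ?thesis by simp
qed

lemma abs_cos_deriv_add_diff_le:
  "\<bar>cos_deriv k (a + y) - cos_deriv k y\<bar> \<le> (1 - cos a) + \<bar>sin a\<bar>"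
  using abs_cos_add_diff_le[of a "y + real k * pi / 2"]
  by (simp add: cos_deriv_def add.assoc)

fun phi_m1_deriv :: "nat \<Rightarrow> real \<Rightarrow> real" where
  \<comment> \<open>correct only up to order 2\<close>
  "phi_m1_deriv 0 = phi_m1"
| "phi_m1_deriv (Suc 0) = (\<lambda>y. sin y - y * cos y)"
| "phi_m1_deriv (Suc (Suc _)) = (\<lambda>y. y * sin y)"

lemma has_real_derivative_phi_m1_deriv:
  assumes "k < 2"
  shows "(phi_m1_deriv k has_real_derivative phi_m1_deriv (Suc k) y) (at y within S)"
proof -
  have "k = 0 \<or> k = 1" using assms by auto
  then show ?thesis
    by (auto simp: phi_m1_def[abs_def] algebra_simps intro!: derivative_eq_intros)
qed

lemma abs_phi_m1_le: "\<bar>phi_m1 y\<bar> \<le> 3 + \<bar>y\<bar>"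
proof -
  have "\<bar>phi_m1 y\<bar> \<le> 2 * \<bar>cos y\<bar> + 1 + \<bar>y\<bar> * \<bar>sin y\<bar>"
    unfolding phi_m1_def by (simp add: abs_mult[symmetric] abs_triangle_ineq4 order_trans[OF abs_triangle_ineq4])
  also have "\<dots> \<le> 2 * 1 + 1 + \<bar>y\<bar> * 1"
    by (intro add_mono mult_left_mono) auto
  finally show ?thesis by simp
qed

locale perturbed_cos =
  fixes g :: "real \<Rightarrow> real" and \<epsilon> :: real
  assumes Ck_g: "Ck_on 3 g {-pi..pi}"
    and Ck_norm_g: "Ck_norm 3 g {-pi..pi} \<le> \<epsilon>"
    and \<epsilon>_le: "\<epsilon> \<le> 1/10"
begin

definition a0 :: "real \<Rightarrow> real" where
  "a0 x = cos x + g x"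

definition a0_deriv :: "nat \<Rightarrow> real \<Rightarrow> real" where
  "a0_deriv k x = cos_deriv k x + nderiv k g {-pi..pi} x"

lemma a0_deriv_0 [simp]: "a0_deriv 0 = a0"
  by (simp add: fun_eq_iff a0_def a0_deriv_def)

lemma abs_nderiv_g_le:
  assumes "k \<le> 3" "x \<in> {-pi..pi}"
  shows "\<bar>nderiv k g {-pi..pi} x\<bar> \<le> \<epsilon>"
  using abs_nderiv_le_Ck_norm[OF Ck_g compact_Icc assms] Ck_norm_g by linarith

lemma \<epsilon>_nonneg: "0 \<le> \<epsilon>"
  using abs_nderiv_g_le[of 0 0] by simp

lemma has_real_derivative_a0_deriv:
  assumes "k < 3" "x \<in> {-pi..pi}"
  shows "(a0_deriv k has_real_derivative a0_deriv (Suc k) x) (at x within {-pi..pi})"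
  unfolding a0_deriv_def[abs_def]
  using Ck_g assms unfolding Ck_on_def
  by (intro DERIV_add has_real_derivative_cos_deriv) auto

lemma has_real_derivative_a0_deriv_at:
  assumes "k < 3" "\<bar>x\<bar> < pi"
  shows "(a0_deriv k has_real_derivative a0_deriv (Suc k) x) (at x)"
proof -
  have "x \<in> interior {-pi..pi}" using assms(2) by (simp add: abs_less_iff)
  then show ?thesis
    using has_real_derivative_a0_deriv[OF assms(1)] interior_subset
    by (metis at_within_interior subsetD)
qed

lemma nderiv_a0:
  assumes "j \<le> 3" "x \<in> {-pi..pi}"
  shows "nderiv j a0 {-pi..pi} x = a0_deriv j x"
  by (rule nderiv_eq_on_interval[of "-pi" pi 3 a0_deriv])
     (use has_real_derivative_a0_deriv assms in auto)

lemma a0_deriv_2_neg: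
  assumes "\<bar>x\<bar> \<le> pi/3"
  shows "a0_deriv 2 x < 0"
proof -
  have "cos (pi/3) \<le> cos \<bar>x\<bar>" by (rule cos_monotone_0_pi_le) (use assms in auto)
  then have "1/2 \<le> cos x" by (simp add: cos_60)
  moreover have "x \<in> {-pi..pi}" using assms pi_gt_zero by auto
  ultimately show ?thesis
    using abs_nderiv_g_le[of 2 x] \<epsilon>_le by (simp add: a0_deriv_def cos_deriv_2)
qed

lemma maximizer_near_0:
  assumes "x0 \<in> {-pi..pi}" "\<forall>x\<in>{-pi..pi}. a0 x \<le> a0 x0"
  shows "\<bar>x0\<bar> < pi/3" and "a0_deriv 1 x0 = 0"
proof -
  have "1 - \<epsilon> \<le> a0 0" using abs_nderiv_g_le[of 0 0] by (simp add: a0_def)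
  also have "\<dots> \<le> a0 x0" using assms by simp
  also have "\<dots> \<le> cos x0 + \<epsilon>" using abs_nderiv_g_le[of 0 x0] assms(1) by (simp add: a0_def)
  finally have "cos (pi/3) < cos \<bar>x0\<bar>" using \<epsilon>_le by (simp add: cos_60)
  then show small: "\<bar>x0\<bar> < pi/3"
    using cos_monotone_0_pi_le[of "pi/3" "\<bar>x0\<bar>"] assms(1) by fastforce
  have local_max: "\<forall>y. \<bar>x0 - y\<bar> < pi/2 \<longrightarrow> a0_deriv 0 y \<le> a0_deriv 0 x0"
  proof (intro allI impI)
    fix y assume "\<bar>x0 - y\<bar> < pi/2"
    then have "y \<in> {-pi..pi}" using small pi_gt_zero unfolding atLeastAtMost_iff by arith
    then show "a0_deriv 0 y \<le> a0_deriv 0 x0" using assms(2) by simp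
  qed
  have "(a0_deriv 0 has_real_derivative a0_deriv 1 x0) (at x0)"
    using has_real_derivative_a0_deriv_at[of 0 x0] small pi_gt_zero by simp
  then show "a0_deriv 1 x0 = 0"
    by (rule DERIV_local_max[OF _ _ local_max]) simp
qed

lemma critical_point_unique:
  assumes "\<bar>u\<bar> < pi/3" "\<bar>v\<bar> < pi/3" "a0_deriv 1 u = 0" "a0_deriv 1 v = 0"
  shows "u = v"
proof -
  have "a0_deriv 1 q < a0_deriv 1 p" if "p < q" "\<bar>p\<bar> < pi/3" "\<bar>q\<bar> < pi/3" for p q
  proof (rule DERIV_neg_imp_decreasing[OF \<open>p < q\<close>])
    fix x assume "p \<le> x" "x \<le> q"
    then have "\<bar>x\<bar> \<le> pi/3" using that by auto
    then show "\<exists>y. DERIV (a0_deriv 1) x :> y \<and> y < 0"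
      using has_real_derivative_a0_deriv_at[of 1 x] a0_deriv_2_neg[of x] pi_gt_zero
      by (auto simp: numeral_2_eq_2)
  qed
  then show ?thesis using assms by (metis less_irrefl linorder_neqE_linordered_idom)
qed

lemma ex1_maximizer: "\<exists>!x0. x0 \<in> {-pi..pi} \<and> (\<forall>x\<in>{-pi..pi}. a0 x \<le> a0 x0)"
proof -
  have "continuous_on {-pi..pi} a0"
    using has_real_derivative_a0_deriv[of 0] by (intro DERIV_continuous_on) auto
  then obtain xm where xm: "xm \<in> {-pi..pi}" "\<forall>x\<in>{-pi..pi}. a0 x \<le> a0 xm"
    using continuous_attains_sup[of "{-pi..pi}" a0] by auto
  show ?thesis
  proof (rule ex1I[of _ xm])
    fix y assume y: "y \<in> {-pi..pi} \<and> (\<forall>x\<in>{-pi..pi}. a0 x \<le> a0 y)"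
    show "y = xm"
      using critical_point_unique maximizer_near_0[of y] maximizer_near_0[OF xm] y by simp
  qed (use xm in simp)
qed

end

locale perturbed_cos_maximizer = perturbed_cos +
  fixes x0 :: real
  assumes x0_mem: "x0 \<in> {-pi..pi}"
    and x0_max: "\<forall>x\<in>{-pi..pi}. a0 x \<le> a0 x0"
begin

definition mu0 :: real where
  "mu0 = - nderiv 2 a0 {-pi..pi} x0"

definition am1 :: real where
  "am1 = 1 + a0 x0 / nderiv 2 a0 {-pi..pi} x0"

definition eta :: "real \<Rightarrow> real" where
  "eta y = a0 (x0 + y) / mu0 - cos y"

definition xi :: "real \<Rightarrow> real" where
  \<comment> \<open>the \<open>phi_1\<close> term of the paper is absent since its coefficient \<open>alpha\<^sub>1\<^sub>,\<^sub>0\<close> is \<open>0\<close>\<close>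
  "xi y = eta y - am1 * phi_m1 y"

definition eta_deriv :: "nat \<Rightarrow> real \<Rightarrow> real" where
  "eta_deriv k y = a0_deriv k (x0 + y) / mu0 - cos_deriv k y"

lemma x0_small: "\<bar>x0\<bar> < pi/3"
  and a0_deriv_1_x0: "a0_deriv 1 x0 = 0"
  using maximizer_near_0 x0_mem x0_max by auto

lemma abs_sin_x0_le: "\<bar>sin x0\<bar> \<le> \<epsilon>"
  using a0_deriv_1_x0 abs_nderiv_g_le[of 1 x0] x0_mem by (simp add: a0_deriv_def cos_deriv_1)

lemma one_minus_cos_x0_le: "1 - cos x0 \<le> \<epsilon>"
proof -
  have "0 \<le> cos x0" using x0_small by (intro cos_ge_zero) auto
  then have "1 - cos x0 \<le> (1 - cos x0) * (1 + cos x0)"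
    using cos_le_one[of x0] by (simp add: algebra_simps mult_left_le_one_le)
  also have "\<dots> = \<bar>sin x0\<bar> * \<bar>sin x0\<bar>"
    using sin_cos_squared_add[of x0] by (simp add: algebra_simps power2_eq_square abs_mult[symmetric])
  also have "\<dots> \<le> \<epsilon> * 1"
    using abs_sin_x0_le \<epsilon>_nonneg by (intro mult_mono) auto
  finally show ?thesis by simp
qed

lemma mu0_eq: "mu0 = cos x0 - nderiv 2 g {-pi..pi} x0"
  using nderiv_a0[of 2 x0] x0_mem by (simp add: mu0_def a0_deriv_def cos_deriv_2)

lemma abs_mu0_minus_1_le: "\<bar>mu0 - 1\<bar> \<le> 2 * \<epsilon>"
  using one_minus_cos_x0_le abs_nderiv_g_le[of 2 x0] x0_mem cos_le_one[of x0]
  unfolding mu0_eq by linarith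

lemma mu0_ge: "4/5 \<le> mu0"
  using abs_mu0_minus_1_le \<epsilon>_le by linarith

lemma am1_eq: "am1 = - (nderiv 2 g {-pi..pi} x0 + g x0) / mu0"
proof -
  have "am1 = (mu0 - a0 x0) / mu0"
    using mu0_ge by (simp add: am1_def mu0_def field_simps)
  then show ?thesis by (simp add: mu0_eq a0_def)
qed

lemma abs_am1_le: "\<bar>am1\<bar> \<le> 3 * \<epsilon>"
proof -
  have "\<bar>am1\<bar> = \<bar>nderiv 2 g {-pi..pi} x0 + g x0\<bar> / mu0"
    using mu0_ge by (simp add: am1_eq abs_divide)
  also have "\<dots> \<le> (2 * \<epsilon>) / (4/5)"
    using abs_nderiv_g_le[of 2 x0] abs_nderiv_g_le[of 0 x0] x0_mem mu0_ge \<epsilon>_nonneg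
    by (intro frac_le) auto
  finally show ?thesis using \<epsilon>_nonneg by simp
qed

lemma has_real_derivative_eta_deriv:
  assumes "k < 3" "y \<in> {-pi - x0..pi - x0}"
  shows "(eta_deriv k has_real_derivative eta_deriv (Suc k) y) (at y within {-pi - x0..pi - x0})"
proof -
  have "(+) x0 ` {-pi - x0..pi - x0} = {-pi..pi}" by simp
  then have "((\<lambda>y. a0_deriv k (x0 + y)) has_real_derivative a0_deriv (Suc k) (x0 + y))
      (at y within {-pi - x0..pi - x0})"
    using has_real_derivative_a0_deriv[OF assms(1)] assms(2)
    by (intro has_real_derivative_shift) auto
  then show ?thesis
    unfolding eta_deriv_def[abs_def]
    by (intro DERIV_diff DERIV_cdivide has_real_derivative_cos_deriv)
qed

lemma nderiv_eta:
  assumes "j \<le> 3" "y \<in> {-pi - x0..pi - x0}"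
  shows "nderiv j eta {-pi - x0..pi - x0} y = eta_deriv j y"
  by (rule nderiv_eq_on_interval[of _ _ 3 eta_deriv])
     (use has_real_derivative_eta_deriv assms in \<open>auto simp: eta_def eta_deriv_def\<close>)

lemma nderiv_xi:
  assumes "j \<le> 2" "y \<in> {-pi - x0..pi - x0}"
  shows "nderiv j xi {-pi - x0..pi - x0} y = eta_deriv j y - am1 * phi_m1_deriv j y"
proof (rule nderiv_eq_on_interval[of _ _ 2 "\<lambda>k y. eta_deriv k y - am1 * phi_m1_deriv k y"])
  fix k :: nat and y assume "k < 2" "y \<in> {-pi - x0..pi - x0}"
  then show "((\<lambda>y. eta_deriv k y - am1 * phi_m1_deriv k y) has_real_derivative
      eta_deriv (Suc k) y - am1 * phi_m1_deriv (Suc k) y) (at y within {-pi - x0..pi - x0})"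
    by (intro DERIV_diff DERIV_cmult has_real_derivative_eta_deriv has_real_derivative_phi_m1_deriv)
       auto
qed (use assms in \<open>auto simp: xi_def eta_def eta_deriv_def\<close>)

lemma zero_in_shifted_interval: "0 \<in> {-pi - x0..pi - x0}"
  using x0_small pi_gt_zero by auto

lemma xi_0: "xi 0 = 0"
  using mu0_ge by (simp add: xi_def eta_def am1_def mu0_def phi_m1_def field_simps)

lemma nderiv_1_xi_0: "nderiv 1 xi {-pi - x0..pi - x0} 0 = 0"
  using nderiv_xi[of 1 0] zero_in_shifted_interval a0_deriv_1_x0
  by (simp add: eta_deriv_def cos_deriv_1)

lemma nderiv_2_xi_0: "nderiv 2 xi {-pi - x0..pi - x0} 0 = 0"
proof -
  have "a0_deriv 2 x0 = - mu0"
    using nderiv_a0[of 2 x0] x0_mem by (simp add: mu0_def)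
  moreover have "phi_m1_deriv 2 0 = 0" by (simp add: numeral_2_eq_2)
  ultimately show ?thesis
    using nderiv_xi[of 2 0] zero_in_shifted_interval mu0_ge
    by (simp add: eta_deriv_def cos_deriv_2)
qed

lemma abs_eta_deriv_le:
  assumes "k \<le> 3" "y \<in> {-pi - x0..pi - x0}"
  shows "\<bar>eta_deriv k y\<bar> \<le> 7 * \<epsilon>"
proof -
  define N where "N = (cos_deriv k (x0 + y) - cos_deriv k y) + (1 - mu0) * cos_deriv k y
    + nderiv k g {-pi..pi} (x0 + y)"
  have "eta_deriv k y = N / mu0"
    using mu0_ge by (simp add: eta_deriv_def a0_deriv_def N_def field_simps)
  have "\<bar>cos_deriv k (x0 + y) - cos_deriv k y\<bar> \<le> 2 * \<epsilon>"
    using abs_cos_deriv_add_diff_le[of k x0 y] one_minus_cos_x0_le abs_sin_x0_le by linarith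
  moreover have "\<bar>(1 - mu0) * cos_deriv k y\<bar> \<le> 2 * \<epsilon> * 1"
    unfolding abs_mult cos_deriv_def using abs_mu0_minus_1_le
    by (intro mult_mono) (auto simp: abs_minus_commute)
  moreover have "\<bar>nderiv k g {-pi..pi} (x0 + y)\<bar> \<le> \<epsilon>"
    using abs_nderiv_g_le assms by auto
  ultimately have "\<bar>N\<bar> \<le> 5 * \<epsilon>" unfolding N_def by linarith
  then have "\<bar>N\<bar> / mu0 \<le> (5 * \<epsilon>) / (4/5)"
    using mu0_ge \<epsilon>_nonneg by (intro frac_le) auto
  also have "\<dots> \<le> 7 * \<epsilon>" using \<epsilon>_nonneg by simp
  finally show ?thesis
    using \<open>eta_deriv k y = N / mu0\<close> mu0_ge by (simp add: abs_divide)
qed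

lemma supnorm_xi_le: "supnorm xi {-pi - x0..pi - x0} \<le> 34 * \<epsilon>"
proof (rule supnorm_le)
  fix y assume y: "y \<in> {-pi - x0..pi - x0}"
  have "\<bar>phi_m1 y\<bar> \<le> 9"
    using abs_phi_m1_le[of y] y x0_small pi_less_4 by auto
  then have "\<bar>am1 * phi_m1 y\<bar> \<le> 3 * \<epsilon> * 9"
    unfolding abs_mult using abs_am1_le by (intro mult_mono) auto
  moreover have "xi y = eta_deriv 0 y - am1 * phi_m1 y"
    by (simp add: xi_def eta_def eta_deriv_def)
  ultimately show "\<bar>xi y\<bar> \<le> 34 * \<epsilon>"
    using abs_eta_deriv_le[of 0 y] y by linarith
qed (use zero_in_shifted_interval in blast)

lemma sum_supnorm_nderiv_eta_le:
  "(\<Sum>j=1..3. supnorm (nderiv j eta {-pi - x0..pi - x0}) {-pi - x0..pi - x0}) \<le> 21 * \<epsilon>"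
proof -
  have "(\<Sum>j=1..3. supnorm (nderiv j eta {-pi - x0..pi - x0}) {-pi - x0..pi - x0})
      \<le> (\<Sum>j=1..(3::nat). 7 * \<epsilon>)"
    using abs_eta_deriv_le nderiv_eta zero_in_shifted_interval
    by (intro sum_mono supnorm_le) auto
  then show ?thesis by simp
qed

end

theorem lemma4p5:
  shows "\<exists>\<delta>>0. \<exists>C0>0. \<forall>at0 :: real \<Rightarrow> real.
    Ck_on 3 at0 {-pi..pi} \<and> Ck_norm 3 at0 {-pi..pi} \<le> \<delta> \<longrightarrow>
    (let a0 = (\<lambda>x. cos x + at0 x) in
      (\<exists>!x0. x0 \<in> {-pi..pi} \<and> (\<forall>x\<in>{-pi..pi}. a0 x \<le> a0 x0)) \<and>
      (\<forall>x0. x0 \<in> {-pi..pi} \<and> (\<forall>x\<in>{-pi..pi}. a0 x \<le> a0 x0) \<longrightarrow>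
        (let mu0 = - nderiv 2 a0 {-pi..pi} x0;
             am1 = 1 + a0 x0 / nderiv 2 a0 {-pi..pi} x0;
             a1 = (0::real);
             T = {-pi - x0..pi - x0};
             eta0 = (\<lambda>y. a0 (x0 + y) / mu0 - cos y);
             xi0 = (\<lambda>y. eta0 y - am1 * phi_m1 y - a1 * phi_1 y)
         in \<bar>mu0 - 1\<bar> \<le> C0 * \<delta> \<and> \<bar>am1\<bar> \<le> C0 * \<delta> \<and>
            xi0 0 = 0 \<and> nderiv 1 xi0 T 0 = 0 \<and> nderiv 2 xi0 T 0 = 0 \<and>
            supnorm xi0 T + (\<Sum>j=1..3. supnorm (nderiv j eta0 T) T) \<le> C0 * \<delta>)))"
  apply (rule exI[of _ "1/10"], intro conjI exI[of _ 55] allI impI)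
    apply simp
   apply simp
  subgoal premises assms for at0
  proof -
    interpret perturbed_cos at0 "1/10"
      using assms by unfold_locales auto
    have a0_eq: "(\<lambda>x. cos x + at0 x) = a0" by (simp add: fun_eq_iff a0_def)
    show ?thesis
      unfolding Let_def a0_eq
      apply (intro conjI[OF ex1_maximizer] allI impI)
      subgoal premises maximizer for x0
      proof -
        interpret perturbed_cos_maximizer at0 "1/10" x0
          using maximizer by unfold_locales auto
        show ?thesis
          using abs_mu0_minus_1_le abs_am1_le xi_0 nderiv_1_xi_0 nderiv_2_xi_0
            supnorm_xi_le sum_supnorm_nderiv_eta_le
          unfolding mu0_def[symmetric] am1_def[symmetric] eta_def[symmetric]
            mult_zero_left diff_zero xi_def[symmetric]
          by simp
      qed
      done
  qed
  done

end
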